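(* Let $G=S_\infty$ and $m<\omega$. (a) If $M\subseteq S(G)$ is a minimal subflow, then $\phi(\mathcal{F}^M_m)$ is a thick ultrafilter on $[\omega]^m$. (b) Conversely, if $p$ is a thick ultrafilter on $[\omega]^m$, then $\{\phi^{-1}(T):T\in p\}$ generates a maximal thick filter on $H_m$, and hence there is a minimal subflow $M\subseteq S(G)$ with $p=\phi(\mathcal{F}^M_m)$.
   Context: View $S_\infty$ as the automorphism group of $\omega$ in the empty language with $\mathbf{A}_n=n=\{0,\dots,n-1\}$; $H_n$ is the set of injections $n\to\omega$, written as tuples $(s_0,\dots,s_{n-1})$, and $\mathrm{Emb}(\mathbf{A}_m,\mathbf{A}_n)$ the set of injections $m\to n$. $S(G)$ is the inverse limit of the spaces $\beta H_n$ of ultrafilters along the continuous extensions of restriction maps $H_n\to H_m$; $\alpha(n)$ denotes the $n$-th coordinate. Right $G$-action: for $S\subseteq H_m$, $S\in(\alpha g)(m)$ iff $\{x\in H_n:x\circ g|_m\in S\}\in\alpha(n)$, for $n$ with $g(\{0,..,m-1\})\subseteq n$. A minimal subflow is a nonempty closed $G$-invariant subset containing no proper such subset. For closed $Y$, $\mathcal{F}^Y_m=\{T\subseteq H_m:T\in\alpha(m)\ \forall\alpha\in Y\}$. $T\subseteq H_m$ is thick if for every $n\geq m$ there is $s\in H_n$ with $s\circ\mathrm{Emb}(\mathbf{A}_m,\mathbf{A}_n)\subseteq T$; $T\subseteq[\omega]^m$ is thick if for every $n\geq m$ there is $s\in[\omega]^n$ with $[s]^m\subseteq T$. A thick filter (ultrafilter)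 is one all of whose members are thick; a maximal thick filter is one maximal among thick filters. $\phi:H_m\to[\omega]^m$ is $\phi(y_0,\dots,y_{m-1})=\{y_0,\dots,y_{m-1}\}$, and for a filter $\mathcal{F}$ on $H_m$, $\phi(\mathcal{F})=\{T\subseteq[\omega]^m:\phi^{-1}(T)\in\mathcal{F}\}$. *)

theory Defs
  imports Main
begin

text \<open>Injections n -> omega, written as tuples (s_0,...,s_{n-1}): distinct lists of length n.\<close>
definition H :: "nat \<Rightarrow> nat list set" where
  "H n = {xs. length xs = n \<and> distinct xs}"

text \<open>Emb(A_m, A_n): injections m -> n, as distinct lists of length m with entries < n.\<close>
definition Emb :: "nat \<Rightarrow> nat \<Rightarrow> nat list set" where
  "Emb m n = {f. length f = m \<and> distinct f \<and> set f \<subseteq> {..<n}}"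

definition comp_tuple :: "nat list \<Rightarrow> nat list \<Rightarrow> nat list" where
  "comp_tuple s f = map (\<lambda>i. s ! i) f"

definition is_filter_on :: "'a set \<Rightarrow> 'a set set \<Rightarrow> bool" where
  "is_filter_on X F \<longleftrightarrow> F \<subseteq> Pow X \<and> X \<in> F \<and>
     (\<forall>A B. A \<in> F \<longrightarrow> B \<in> F \<longrightarrow> A \<inter> B \<in> F) \<and>
     (\<forall>A B. A \<in> F \<longrightarrow> A \<subseteq> B \<longrightarrow> B \<subseteq> X \<longrightarrow> B \<in> F)"

definition is_ultrafilter_on :: "'a set \<Rightarrow> 'a set set \<Rightarrow> bool" where
  "is_ultrafilter_on X U \<longleftrightarrow> is_filter_on X U \<and> {} \<notin> U \<and>
     (\<forall>A. A \<subseteq> X \<longrightarrow> A \<in> U \<or> X - A \<in> U)"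

definition filter_generated :: "'a set \<Rightarrow> 'a set set \<Rightarrow> 'a set set" where
  "filter_generated X B = {T. T \<subseteq> X \<and>
     (T = X \<or> (\<exists>F. F \<subseteq> B \<and> finite F \<and> F \<noteq> {} \<and> \<Inter>F \<subseteq> T))}"

text \<open>S(G): coherent sequences of ultrafilters alpha(n) on H_n (inverse limit of beta H_n
  along the extensions of the restriction maps H_n -> H_m, x |-> take m x).\<close>
definition SG :: "(nat \<Rightarrow> nat list set set) set" where
  "SG = {\<alpha>. (\<forall>n. is_ultrafilter_on (H n) (\<alpha> n)) \<and>
            (\<forall>m n S. m \<le> n \<longrightarrow> S \<subseteq> H m \<longrightarrow>
                 (S \<in> \<alpha> m \<longleftrightarrow> {x \<in> H n. take m x \<in> S} \<in> \<alpha> n))}"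

definition Sinf :: "(nat \<Rightarrow> nat) set" where
  "Sinf = {g. bij g}"

text \<open>Right action: S in (alpha g)(m) iff {x in H_n : x o g|_m in S} in alpha(n),
  for some (here: the least) n with g({0..m-1}) subseteq n.\<close>
definition act :: "(nat \<Rightarrow> nat list set set) \<Rightarrow> (nat \<Rightarrow> nat) \<Rightarrow> (nat \<Rightarrow> nat list set set)" where
  "act \<alpha> g = (\<lambda>m. let n = (LEAST n. g ` {..<m} \<subseteq> {..<n}) in
      {S. S \<subseteq> H m \<and> {x \<in> H n. map (\<lambda>i. x ! g i) [0..<m] \<in> S} \<in> \<alpha> n})"

text \<open>Closed subsets of S(G) in the inverse-limit (product of Stone spaces) topology.
  The sets {alpha in S(G). A in alpha(m)} (A subseteq H_m) form a base of this topology
  (finite intersections reduce to one such set by coherence), so Y is closed iff every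
  point outside Y has such a basic neighbourhood disjoint from Y.\<close>
definition closed_SG :: "(nat \<Rightarrow> nat list set set) set \<Rightarrow> bool" where
  "closed_SG Y \<longleftrightarrow> Y \<subseteq> SG \<and>
     (\<forall>\<alpha> \<in> SG - Y. \<exists>m A. A \<subseteq> H m \<and> A \<in> \<alpha> m \<and> (\<forall>\<beta>\<in>Y. A \<notin> \<beta> m))"

definition invariant_SG :: "(nat \<Rightarrow> nat list set set) set \<Rightarrow> bool" where
  "invariant_SG Y \<longleftrightarrow> (\<forall>\<alpha>\<in>Y. \<forall>g\<in>Sinf. act \<alpha> g \<in> Y)"

definition subflow :: "(nat \<Rightarrow> nat list set set) set \<Rightarrow> bool" where
  "subflow Y \<longleftrightarrow> Y \<noteq> {} \<and> closed_SG Y \<and> invariant_SG Y"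

definition minimal_subflow :: "(nat \<Rightarrow> nat list set set) set \<Rightarrow> bool" where
  "minimal_subflow M \<longleftrightarrow> subflow M \<and> (\<forall>Y. Y \<subseteq> M \<longrightarrow> subflow Y \<longrightarrow> Y = M)"

definition FY :: "(nat \<Rightarrow> nat list set set) set \<Rightarrow> nat \<Rightarrow> nat list set set" where
  "FY Y m = {T. T \<subseteq> H m \<and> (\<forall>\<alpha>\<in>Y. T \<in> \<alpha> m)}"

definition thick_H :: "nat \<Rightarrow> nat list set \<Rightarrow> bool" where
  "thick_H m T \<longleftrightarrow> T \<subseteq> H m \<and>
     (\<forall>n\<ge>m. \<exists>s\<in>H n. comp_tuple s ` Emb m n \<subseteq> T)"

definition msets :: "nat \<Rightarrow> nat set set" where
  "msets m = {A. finite A \<and> card A = m}"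

definition thick_S :: "nat \<Rightarrow> nat set set \<Rightarrow> bool" where
  "thick_S m T \<longleftrightarrow> T \<subseteq> msets m \<and>
     (\<forall>n\<ge>m. \<exists>s \<in> msets n. {B. B \<subseteq> s \<and> B \<in> msets m} \<subseteq> T)"

definition thick_filter_H :: "nat \<Rightarrow> nat list set set \<Rightarrow> bool" where
  "thick_filter_H m F \<longleftrightarrow> is_filter_on (H m) F \<and> (\<forall>T\<in>F. thick_H m T)"

definition max_thick_filter_H :: "nat \<Rightarrow> nat list set set \<Rightarrow> bool" where
  "max_thick_filter_H m F \<longleftrightarrow> thick_filter_H m F \<and>
     (\<forall>F'. thick_filter_H m F' \<longrightarrow> F \<subseteq> F' \<longrightarrow> F' = F)"

definition thick_ultrafilter_S :: "nat \<Rightarrow> nat set set set \<Rightarrow> bool" where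
  "thick_ultrafilter_S m p \<longleftrightarrow> is_ultrafilter_on (msets m) p \<and> (\<forall>T\<in>p. thick_S m T)"

definition phi :: "nat list \<Rightarrow> nat set" where
  "phi y = set y"

definition phi_filter :: "nat \<Rightarrow> nat list set set \<Rightarrow> nat set set set" where
  "phi_filter m F = {T. T \<subseteq> msets m \<and> {y \<in> H m. phi y \<in> T} \<in> F}"

definition phi_pre :: "nat \<Rightarrow> nat set set \<Rightarrow> nat list set" where
  "phi_pre m T = {y \<in> H m. phi y \<in> T}"

end

theory Submission
  imports Defs "HOL-Library.Ramsey"
begin

text \<open>
  (a) Let \<open>M\<close> be a minimal subflow. Since every embedding \<open>m \<rightarrow> n\<close> extends to a
  permutation and \<open>M\<close> is invariant, all members of \<open>F\<^sup>M\<^sub>n\<close> are thick. Given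
  \<open>A \<subseteq> [\<omega>]\<^sup>m\<close>, Ramsey's theorem inside thick sets shows that all members of all
  \<open>F\<^sup>M\<^sub>N\<close> contain tuples homogeneous for \<open>A\<close>, or all contain tuples homogeneous for
  its complement. In the first case compactness of \<open>S(G)\<close> produces a point of \<open>M\<close> whose
  whole orbit contains \<open>\<phi>\<^sup>-\<^sup>1(A)\<close> in its \<open>m\<close>-th coordinate; these points form a closed
  invariant set, which by minimality is all of \<open>M\<close>. So \<open>\<phi>(F\<^sup>M\<^sub>m)\<close> is an ultrafilter.

  (b) For a thick ultrafilter \<open>p\<close>, compactness and thickness give a point whose orbit contains
  \<open>\<phi>\<^sup>-\<^sup>1(S)\<close> for all \<open>S \<in> p\<close>; a minimal subflow \<open>M\<close> inside the closed invariant
  set of such points has \<open>p \<subseteq> \<phi>(F\<^sup>M\<^sub>m)\<close>, hence equality of ultrafilters. The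
  generated filter is maximal thick because a thick subset of \<open>H\<^sub>m\<close> contains every
  ordering of one of its tuples.
\<close>

section \<open>Ultrafilters on a set\<close>

lemma ultrafilter_on_subset: "is_ultrafilter_on X U \<Longrightarrow> A \<in> U \<Longrightarrow> A \<subseteq> X"
  by (auto simp: is_ultrafilter_on_def is_filter_on_def)

lemma ultrafilter_on_top: "is_ultrafilter_on X U \<Longrightarrow> X \<in> U"
  by (auto simp: is_ultrafilter_on_def is_filter_on_def)

lemma ultrafilter_on_empty: "is_ultrafilter_on X U \<Longrightarrow> {} \<notin> U"
  by (auto simp: is_ultrafilter_on_def)

lemma ultrafilter_on_Int: "is_ultrafilter_on X U \<Longrightarrow> A \<in> U \<Longrightarrow> B \<in> U \<Longrightarrow> A \<inter> B \<in> U"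
  by (auto simp: is_ultrafilter_on_def is_filter_on_def)

lemma ultrafilter_on_mono:
  "is_ultrafilter_on X U \<Longrightarrow> A \<in> U \<Longrightarrow> A \<subseteq> B \<Longrightarrow> B \<subseteq> X \<Longrightarrow> B \<in> U"
  by (auto simp: is_ultrafilter_on_def is_filter_on_def)

lemma ultrafilter_on_Diff_iff:
  assumes U: "is_ultrafilter_on X U" and A: "A \<subseteq> X"
  shows "X - A \<in> U \<longleftrightarrow> A \<notin> U"
proof
  assume "X - A \<in> U"
  then show "A \<notin> U"
    using ultrafilter_on_Int[OF U] ultrafilter_on_empty[OF U] by (metis Diff_disjoint)
qed (use U A in \<open>auto simp: is_ultrafilter_on_def\<close>)

lemma ultrafilter_on_INT:
  assumes U: "is_ultrafilter_on X U" and "finite K" and "\<And>k. k \<in> K \<Longrightarrow> P k \<in> U"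
  shows "X \<inter> (\<Inter>k\<in>K. P k) \<in> U"
  using assms(2,3)
proof (induction K rule: finite_induct)
  case empty
  then show ?case using ultrafilter_on_top[OF U] by simp
next
  case (insert k K)
  then have "(X \<inter> (\<Inter>k\<in>K. P k)) \<inter> P k \<in> U" using ultrafilter_on_Int[OF U] by auto
  then show ?case by (simp add: Int_ac)
qed

lemma ultrafilter_on_vimage:
  assumes U: "is_ultrafilter_on X U" and f: "\<And>x. x \<in> X \<Longrightarrow> f x \<in> Y"
  shows "is_ultrafilter_on Y {S. S \<subseteq> Y \<and> {x\<in>X. f x \<in> S} \<in> U}" (is "is_ultrafilter_on Y ?V")
  unfolding is_ultrafilter_on_def is_filter_on_def
proof (intro conjI allI impI)
  have "{x\<in>X. f x \<in> Y} = X" using f by auto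
  then show "Y \<in> ?V"
    using ultrafilter_on_top[OF U] by simp
next
  fix A B
  assume "A \<in> ?V" "B \<in> ?V"
  moreover have "{x\<in>X. f x \<in> A \<inter> B} = {x\<in>X. f x \<in> A} \<inter> {x\<in>X. f x \<in> B}" by auto
  ultimately show "A \<inter> B \<in> ?V"
    using ultrafilter_on_Int[OF U] by auto
next
  fix A B
  assume "A \<in> ?V" "A \<subseteq> B" "B \<subseteq> Y"
  then show "B \<in> ?V"
    using ultrafilter_on_mono[OF U, of "{x\<in>X. f x \<in> A}" "{x\<in>X. f x \<in> B}"] by auto
next
  fix A assume A: "A \<subseteq> Y"
  have "{x\<in>X. f x \<in> Y - A} = X - {x\<in>X. f x \<in> A}" using f by auto
  then show "A \<in> ?V \<or> Y - A \<in> ?V"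
    using A ultrafilter_on_Diff_iff[OF U, of "{x\<in>X. f x \<in> A}"] by auto
qed (use ultrafilter_on_empty[OF U] in auto)

lemma ultrafilter_on_subset_eq:
  assumes U: "is_ultrafilter_on X U" and V: "is_ultrafilter_on X V" and sub: "U \<subseteq> V"
  shows "U = V"
proof
  show "V \<subseteq> U"
  proof
    fix A assume A: "A \<in> V"
    then have "A \<subseteq> X" by (rule ultrafilter_on_subset[OF V])
    show "A \<in> U"
    proof (rule ccontr)
      assume "A \<notin> U"
      then have "X - A \<in> V" using ultrafilter_on_Diff_iff[OF U \<open>A \<subseteq> X\<close>] sub by blast
      then show False using ultrafilter_on_Diff_iff[OF V \<open>A \<subseteq> X\<close>] A by blast
    qed
  qed
qed (rule sub)

definition downward_directed :: "'a set set \<Rightarrow> bool" where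
  "downward_directed B \<longleftrightarrow> (\<forall>X\<in>B. \<forall>Y\<in>B. \<exists>Z\<in>B. Z \<subseteq> X \<inter> Y)"

definition up_closure :: "'a set \<Rightarrow> 'a set set \<Rightarrow> 'a set set" where
  "up_closure I B = {T. T \<subseteq> I \<and> (\<exists>X\<in>B. X \<subseteq> T)}"

lemma downward_directed_lower_bound:
  assumes B: "downward_directed B" and "finite F" "F \<noteq> {}" "F \<subseteq> B"
  shows "\<exists>X\<in>B. X \<subseteq> \<Inter>F"
  using assms(2-4)
proof (induction F rule: finite_ne_induct)
  case (singleton Y)
  then show ?case by auto
next
  case (insert Y F)
  then obtain X where X: "X \<in> B" "X \<subseteq> \<Inter>F" by auto
  obtain Z where "Z \<in> B" "Z \<subseteq> X \<inter> Y"
    using B X(1) insert.prems(1) unfolding downward_directed_def by (meson insert_subset)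
  then show ?case using X(2) by auto
qed

lemma downward_directed_Union:
  assumes dir: "\<And>B. B \<in> \<B> \<Longrightarrow> downward_directed B"
    and comparable: "\<And>B B'. B \<in> \<B> \<Longrightarrow> B' \<in> \<B> \<Longrightarrow> B \<subseteq> B' \<or> B' \<subseteq> B"
  shows "downward_directed (\<Union>\<B>)"
  unfolding downward_directed_def
proof (intro ballI)
  fix X Y assume "X \<in> \<Union>\<B>" "Y \<in> \<Union>\<B>"
  then obtain B where B: "B \<in> \<B>" "X \<in> B" "Y \<in> B" using comparable by blast
  then obtain Z where "Z \<in> B" "Z \<subseteq> X \<inter> Y" using dir[OF B(1)] unfolding downward_directed_def by blast
  then show "\<exists>Z\<in>\<Union>\<B>. Z \<subseteq> X \<inter> Y" using B(1) by blast
qed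

lemma is_filter_on_up_closure:
  assumes "B \<noteq> {}" "B \<subseteq> Pow I" "downward_directed B"
  shows "is_filter_on I (up_closure I B)"
  unfolding is_filter_on_def
proof (intro conjI allI impI)
  show "I \<in> up_closure I B" using assms(1,2) by (auto simp: up_closure_def)
next
  fix S T assume "S \<in> up_closure I B" "T \<in> up_closure I B"
  then obtain X Y where "X \<in> B" "Y \<in> B" "X \<subseteq> S" "Y \<subseteq> T" "S \<subseteq> I"
    by (auto simp: up_closure_def)
  moreover obtain Z where "Z \<in> B" "Z \<subseteq> X \<inter> Y"
    using assms(3) \<open>X \<in> B\<close> \<open>Y \<in> B\<close> unfolding downward_directed_def by meson
  ultimately show "S \<inter> T \<in> up_closure I B"
    unfolding up_closure_def by (intro CollectI conjI bexI[of _ Z]) auto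
next
  fix S T assume "S \<in> up_closure I B" "S \<subseteq> T" "T \<subseteq> I"
  moreover from this obtain X where "X \<in> B" "X \<subseteq> S" by (auto simp: up_closure_def)
  ultimately show "T \<in> up_closure I B"
    unfolding up_closure_def by (intro CollectI conjI bexI[of _ X]) auto
qed (auto simp: up_closure_def)

lemma filter_generated_eq_up_closure:
  assumes "B \<noteq> {}" "B \<subseteq> Pow I" "downward_directed B"
  shows "filter_generated I B = up_closure I B"
proof (intro set_eqI iffI)
  fix T assume "T \<in> filter_generated I B"
  then consider "T = I" | F where "T \<subseteq> I" "F \<subseteq> B" "finite F" "F \<noteq> {}" "\<Inter>F \<subseteq> T"
    by (auto simp: filter_generated_def)
  then show "T \<in> up_closure I B"
  proof cases
    case 1
    then show ?thesis using assms(1,2) by (auto simp: up_closure_def)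
  next
    case 2
    then obtain X where "X \<in> B" "X \<subseteq> \<Inter>F"
      using downward_directed_lower_bound[OF assms(3)] by blast
    then show ?thesis using 2 unfolding up_closure_def by (intro CollectI conjI bexI[of _ X]) auto
  qed
next
  fix T assume "T \<in> up_closure I B"
  then obtain X where "T \<subseteq> I" "X \<in> B" "X \<subseteq> T" by (auto simp: up_closure_def)
  then show "T \<in> filter_generated I B"
    unfolding filter_generated_def by (intro CollectI conjI disjI2 exI[of _ "{X}"]) auto
qed

lemma is_filter_on_Union_chain:
  assumes ne: "C \<noteq> {}" and filters: "\<And>G. G \<in> C \<Longrightarrow> is_filter_on I G"
    and comparable: "\<And>G1 G2. G1 \<in> C \<Longrightarrow> G2 \<in> C \<Longrightarrow> G1 \<subseteq> G2 \<or> G2 \<subseteq> G1"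
  shows "is_filter_on I (\<Union>C)"
  unfolding is_filter_on_def
proof (intro conjI allI impI)
  fix A B assume "A \<in> \<Union>C" "B \<in> \<Union>C"
  then obtain G where G: "G \<in> C" "A \<in> G" "B \<in> G" using comparable by blast
  then have "A \<inter> B \<in> G" using filters[OF G(1)] by (simp add: is_filter_on_def)
  then show "A \<inter> B \<in> \<Union>C" using G(1) by blast
next
  fix A B assume "A \<in> \<Union>C" "A \<subseteq> B" "B \<subseteq> I"
  moreover from this obtain G where "G \<in> C" "A \<in> G" by blast
  ultimately have "B \<in> G" using filters by (simp add: is_filter_on_def)
  then show "B \<in> \<Union>C" using \<open>G \<in> C\<close> by blast
next
  obtain G where "G \<in> C" using ne by blast
  then show "I \<in> \<Union>C" using filters by (auto simp: is_filter_on_def)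
next
  show "\<Union>C \<subseteq> Pow I"
  proof
    fix A assume "A \<in> \<Union>C"
    then obtain G where "G \<in> C" "A \<in> G" by blast
    then show "A \<in> Pow I" using filters[of G] by (auto simp: is_filter_on_def)
  qed
qed

lemma ultrafilter_on_if_maximal:
  assumes U: "is_filter_on I U" "{} \<notin> U"
    and max: "\<And>G. is_filter_on I G \<Longrightarrow> {} \<notin> G \<Longrightarrow> U \<subseteq> G \<Longrightarrow> G = U"
  shows "is_ultrafilter_on I U"
proof -
  have "A \<in> U \<or> I - A \<in> U" if A: "A \<subseteq> I" for A
  proof (cases "\<exists>X\<in>U. X \<inter> A = {}")
    case True
    then obtain X where "X \<in> U" "X \<subseteq> I - A" using U(1) by (auto simp: is_filter_on_def)
    then show ?thesis using U(1) by (auto simp: is_filter_on_def)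
  next
    case False
    \<comment> \<open>\<open>A\<close> meets every member of \<open>U\<close>, so adjoining it keeps the filter proper.\<close>
    define G where "G = up_closure I ((\<lambda>X. X \<inter> A) ` U)"
    have "is_filter_on I G" unfolding G_def
    proof (rule is_filter_on_up_closure)
      show "(\<lambda>X. X \<inter> A) ` U \<noteq> {}" "(\<lambda>X. X \<inter> A) ` U \<subseteq> Pow I"
        using U(1) by (auto simp: is_filter_on_def)
      show "downward_directed ((\<lambda>X. X \<inter> A) ` U)"
        unfolding downward_directed_def
      proof (intro ballI)
        fix S T assume "S \<in> (\<lambda>X. X \<inter> A) ` U" "T \<in> (\<lambda>X. X \<inter> A) ` U"
        then obtain X Y where "X \<in> U" "Y \<in> U" "S = X \<inter> A" "T = Y \<inter> A" by blast
        moreover from this have "X \<inter> Y \<in> U" using U(1) by (simp add: is_filter_on_def)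
        ultimately show "\<exists>Z\<in>(\<lambda>X. X \<inter> A) ` U. Z \<subseteq> S \<inter> T"
          by (intro bexI[OF _ imageI[of "X \<inter> Y"]]) auto
      qed
    qed
    moreover have "{} \<notin> G" using False by (auto simp: G_def up_closure_def)
    moreover have "U \<subseteq> G" using U(1) by (auto simp: G_def up_closure_def is_filter_on_def)
    ultimately have "G = U" by (rule max)
    moreover have "A \<in> G" using U(1) A by (auto simp: G_def up_closure_def is_filter_on_def)
    ultimately show ?thesis by blast
  qed
  then show ?thesis using U by (auto simp: is_ultrafilter_on_def)
qed

lemma ultrafilter_on_extends_filter:
  assumes F: "is_filter_on I F" "{} \<notin> F"
  shows "\<exists>U. is_ultrafilter_on I U \<and> F \<subseteq> U"
proof -
  let ?A = "{G. is_filter_on I G \<and> {} \<notin> G \<and> F \<subseteq> G}"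
  have "\<exists>U\<in>?A. \<forall>G\<in>?A. U \<subseteq> G \<longrightarrow> G = U"
  proof (rule subset_Zorn)
    fix C assume C: "subset.chain ?A C"
    show "\<exists>U\<in>?A. \<forall>G\<in>C. G \<subseteq> U"
    proof (cases "C = {}")
      case True
      then show ?thesis using F by blast
    next
      case False
      have CA: "\<And>G. G \<in> C \<Longrightarrow> G \<in> ?A"
        and comparable: "\<And>G1 G2. G1 \<in> C \<Longrightarrow> G2 \<in> C \<Longrightarrow> G1 \<subseteq> G2 \<or> G2 \<subseteq> G1"
        using C by (auto simp: subset_chain_def)
      have "is_filter_on I (\<Union>C)" using False CA comparable by (intro is_filter_on_Union_chain) auto
      moreover have "{} \<notin> \<Union>C" "F \<subseteq> \<Union>C" using CA False by auto
      ultimately show ?thesis by auto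
    qed
  qed
  then obtain U where "U \<in> ?A" and max: "\<forall>G\<in>?A. U \<subseteq> G \<longrightarrow> G = U" ..
  then have "is_ultrafilter_on I U" using max by (intro ultrafilter_on_if_maximal) auto
  then show ?thesis using \<open>U \<in> ?A\<close> by blast
qed

definition init_tuple :: "(nat \<Rightarrow> nat) \<Rightarrow> nat \<Rightarrow> nat list" where
  "init_tuple e n = map e [0..<n]"

definition reindex :: "(nat \<Rightarrow> nat) \<Rightarrow> nat \<Rightarrow> nat list \<Rightarrow> nat list" where
  "reindex g m x = map (\<lambda>i. x ! g i) [0..<m]"

definition img_bound :: "(nat \<Rightarrow> nat) \<Rightarrow> nat \<Rightarrow> nat" where
  "img_bound g m = Suc (Max (insert 0 (g ` {..<m})))"

lemma img_bound_mono: "m \<le> m' \<Longrightarrow> g ` {..<m} \<subseteq> {..<img_bound g m'}"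
proof
  fix y assume "m \<le> m'" "y \<in> g ` {..<m}"
  then have "y \<le> Max (insert 0 (g ` {..<m'}))" by (intro Max_ge) auto
  then show "y \<in> {..<img_bound g m'}" by (simp add: img_bound_def)
qed

lemma img_bound: "g ` {..<m} \<subseteq> {..<img_bound g m}"
  using img_bound_mono by blast

lemma H_take: "x \<in> H n \<Longrightarrow> k \<le> n \<Longrightarrow> take k x \<in> H k"
  by (auto simp: H_def)

lemma card_set_H: "y \<in> H m \<Longrightarrow> card (set y) = m"
  by (auto simp: H_def distinct_card)

lemma init_tuple_H: "inj e \<Longrightarrow> init_tuple e n \<in> H n"
  by (auto simp: init_tuple_def H_def distinct_map inj_on_def)

lemma take_init_tuple: "N \<le> N' \<Longrightarrow> take N (init_tuple e N') = init_tuple e N"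
  by (simp add: init_tuple_def take_map)

lemma set_init_tuple: "set (init_tuple e n) = e ` {..<n}"
  by (auto simp: init_tuple_def)

lemma H_eq_init_tuple:
  assumes x: "x \<in> H N"
  obtains e where "inj e" "init_tuple e N = x"
proof
  define e where "e i = (if i < N then x ! i else sum_list x + 1 + i)" for i
  have len: "length x = N" "distinct x" using x by (auto simp: H_def)
  \<comment> \<open>Outside \<open>{..<N}\<close> the values exceed every entry of \<open>x\<close>.\<close>
  have le: "i < N \<Longrightarrow> x ! i \<le> sum_list x" for i
    using len member_le_sum_list[of "x ! i" x] by auto
  show "inj e"
  proof (rule injI)
    fix i j assume eq: "e i = e j"
    show "i = j"
    proof (cases "i < N"; cases "j < N")
      assume "i < N" "j < N" then show ?thesis using eq len nth_eq_iff_index_eq by (auto simp: e_def)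
    next
      assume "i < N" "\<not> j < N" then show ?thesis using eq le[of i] by (auto simp: e_def)
    next
      assume "\<not> i < N" "j < N" then show ?thesis using eq le[of j] by (auto simp: e_def)
    next
      assume "\<not> i < N" "\<not> j < N" then show ?thesis using eq by (auto simp: e_def)
    qed
  qed
  show "init_tuple e N = x" using len by (auto simp: e_def init_tuple_def intro: nth_equalityI)
qed

lemma reindex_H:
  assumes "inj g" "g ` {..<m} \<subseteq> {..<n}" "x \<in> H n"
  shows "reindex g m x \<in> H m"
proof -
  have "inj_on (\<lambda>i. x ! g i) {0..<m}"
  proof (rule inj_onI)
    fix i j assume ij: "i \<in> {0..<m}" "j \<in> {0..<m}" "x ! g i = x ! g j"
    have "g i < length x" "g j < length x" using assms ij by (auto simp: H_def)
    then have "g i = g j" using ij assms(3) nth_eq_iff_index_eq by (auto simp: H_def)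
    then show "i = j" using assms(1) by (auto dest: injD)
  qed
  then show ?thesis by (auto simp: reindex_def H_def distinct_map)
qed

lemma reindex_take: "g ` {..<m} \<subseteq> {..<k} \<Longrightarrow> reindex g m (take k x) = reindex g m x"
  by (force simp: reindex_def intro!: nth_take)

lemma take_reindex: "m \<le> n \<Longrightarrow> take m (reindex g n x) = reindex g m x"
  by (simp add: reindex_def take_map)

lemma reindex_reindex:
  "h ` {..<m} \<subseteq> {..<k} \<Longrightarrow> reindex h m (reindex g k x) = reindex (g \<circ> h) m x"
  by (force simp: reindex_def)

lemma reindex_init_tuple:
  "g ` {..<m} \<subseteq> {..<N} \<Longrightarrow> reindex g m (init_tuple e N) = init_tuple (e \<circ> g) m"
  by (force simp: reindex_def init_tuple_def)

lemma reindex_id: "x \<in> H m \<Longrightarrow> reindex id m x = x"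
  by (auto simp: reindex_def H_def map_nth)

lemma finite_Emb: "finite (Emb m n)"
proof (rule finite_subset)
  show "Emb m n \<subseteq> {xs. set xs \<subseteq> {..<n} \<and> length xs = m}" by (auto simp: Emb_def)
qed (rule finite_lists_length_eq, simp)

lemma Emb_extends_to_Sinf:
  assumes f: "f \<in> Emb m n"
  obtains g where "g \<in> Sinf" "\<And>i. i < m \<Longrightarrow> g i = f ! i"
proof
  define p where "p = f @ sorted_list_of_set ({..<n} - set f)"
  have f': "distinct f" "set f \<subseteq> {..<n}" "length f = m" using f by (auto simp: Emb_def)
  then have p: "distinct p" "set p = {..<n}" by (auto simp: p_def)
  then have "length p = n" using distinct_card by fastforce
  then have "bij_betw ((!) p) {..<n} {..<n}" using p by (intro bij_betw_nth) auto
  then have "bij_betw (\<lambda>i. if i \<in> {..<n} then p ! i else id i) ({..<n} \<union> - {..<n}) ({..<n} \<union> - {..<n})"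
    by (intro bij_betw_disjoint_Un bij_betw_id) auto
  then show "(\<lambda>i. if i \<in> {..<n} then p ! i else id i) \<in> Sinf"
    unfolding Sinf_def by (simp only: Compl_partition mem_Collect_eq)
  have "m \<le> n" using f' distinct_card[of f] card_mono[of "{..<n}" "set f"] by auto
  then show "(if i \<in> {..<n} then p ! i else id i) = f ! i" if "i < m" for i
    using that f' by (auto simp: p_def nth_append)
qed

lemma comp_tuple_H:
  assumes s: "s \<in> H n" and f: "f \<in> Emb m n"
  shows "comp_tuple s f \<in> H m" "set (comp_tuple s f) \<subseteq> set s"
proof -
  have f': "length f = m" "distinct f" "set f \<subseteq> {..<n}" and s': "length s = n" "distinct s"
    using f s by (auto simp: Emb_def H_def)
  then have "inj_on ((!) s) (set f)" by (intro inj_on_nth) auto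
  then show "comp_tuple s f \<in> H m" using f' by (simp add: H_def comp_tuple_def distinct_map)
  show "set (comp_tuple s f) \<subseteq> set s" using f' s' by (auto simp: comp_tuple_def)
qed

lemma subtuple_eq_comp_tuple:
  assumes s: "s \<in> H n" and y: "y \<in> H m" and sub: "set y \<subseteq> set s"
  obtains f where "f \<in> Emb m n" "comp_tuple s f = y"
proof
  let ?idx = "inv_into {..<n} ((!) s)"
  have bij: "bij_betw ((!) s) {..<n} (set s)" using s by (intro bij_betw_nth) (auto simp: H_def)
  have y': "length y = m" "distinct y" using y by (auto simp: H_def)
  have "inj_on ?idx (set y)"
    using inj_on_inv_into[of "set y" "(!) s" "{..<n}"] sub bij by (auto simp: bij_betw_def)
  moreover have "?idx b \<in> {..<n}" if "b \<in> set y" for b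
    using that sub bij inv_into_into[of b "(!) s" "{..<n}"] by (auto simp: bij_betw_def)
  ultimately show "map ?idx y \<in> Emb m n" using y' by (auto simp: Emb_def distinct_map)
  have "s ! ?idx b = b" if "b \<in> set y" for b
    using that sub bij f_inv_into_f[of b "(!) s" "{..<n}"] by (auto simp: bij_betw_def)
  then show "comp_tuple s (map ?idx y) = y" by (simp add: comp_tuple_def map_idI)
qed

section \<open>The flow \<open>S(G)\<close>\<close>

lemma SG_ultrafilter: "\<alpha> \<in> SG \<Longrightarrow> is_ultrafilter_on (H n) (\<alpha> n)"
  by (auto simp: SG_def)

lemma SG_coherent:
  "\<alpha> \<in> SG \<Longrightarrow> m \<le> n \<Longrightarrow> S \<subseteq> H m \<Longrightarrow> S \<in> \<alpha> m \<longleftrightarrow> {x \<in> H n. take m x \<in> S} \<in> \<alpha> n"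
  by (auto simp: SG_def)

lemma act_eq_reindex:
  assumes \<alpha>: "\<alpha> \<in> SG" and g: "g ` {..<m} \<subseteq> {..<n}"
  shows "act \<alpha> g m = {S. S \<subseteq> H m \<and> {x \<in> H n. reindex g m x \<in> S} \<in> \<alpha> n}"
proof -
  define n0 where "n0 = (LEAST n. g ` {..<m} \<subseteq> {..<n})"
  have n0: "g ` {..<m} \<subseteq> {..<n0}" unfolding n0_def by (rule LeastI[of _ n]) (rule g)
  have "n0 \<le> n" unfolding n0_def by (rule Least_le) (rule g)
  have act: "act \<alpha> g m = {S. S \<subseteq> H m \<and> {x \<in> H n0. reindex g m x \<in> S} \<in> \<alpha> n0}"
    by (simp add: act_def Let_def reindex_def n0_def)
  show ?thesis unfolding act
  proof (intro Collect_cong conj_cong refl)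
    fix S assume S: "S \<subseteq> H m"
    let ?K = "{x \<in> H n0. reindex g m x \<in> S}"
    have "?K \<in> \<alpha> n0 \<longleftrightarrow> {x \<in> H n. take n0 x \<in> ?K} \<in> \<alpha> n"
      by (rule SG_coherent[OF \<alpha> \<open>n0 \<le> n\<close>]) auto
    also have "{x \<in> H n. take n0 x \<in> ?K} = {x \<in> H n. reindex g m x \<in> S}"
      using H_take[OF _ \<open>n0 \<le> n\<close>] reindex_take[OF n0] by auto
    finally show "?K \<in> \<alpha> n0 \<longleftrightarrow> {x \<in> H n. reindex g m x \<in> S} \<in> \<alpha> n" .
  qed
qed

lemma act_in_SG:
  assumes \<alpha>: "\<alpha> \<in> SG" and g: "inj g"
  shows "act \<alpha> g \<in> SG"
  unfolding SG_def
proof (intro CollectI conjI allI impI)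
  fix n
  show "is_ultrafilter_on (H n) (act \<alpha> g n)"
    unfolding act_eq_reindex[OF \<alpha> img_bound]
    by (rule ultrafilter_on_vimage[OF SG_ultrafilter[OF \<alpha>]]) (rule reindex_H[OF g img_bound])
next
  fix m n S assume mn: "m \<le> n" and S: "S \<subseteq> H m"
  let ?N = "img_bound g n"
  have "{x \<in> H ?N. reindex g n x \<in> {y \<in> H n. take m y \<in> S}} = {x \<in> H ?N. reindex g m x \<in> S}"
    using reindex_H[OF g img_bound] take_reindex[OF mn] by auto
  then show "S \<in> act \<alpha> g m \<longleftrightarrow> {x \<in> H n. take m x \<in> S} \<in> act \<alpha> g n"
    unfolding act_eq_reindex[OF \<alpha> img_bound_mono[OF mn]] act_eq_reindex[OF \<alpha> img_bound[of g n]]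
    using S by auto
qed

lemma act_act:
  assumes \<alpha>: "\<alpha> \<in> SG" and g: "inj g"
  shows "act (act \<alpha> g) h = act \<alpha> (g \<circ> h)"
proof
  fix m
  let ?k = "img_bound h m"
  let ?n = "img_bound g ?k"
  have gh: "(g \<circ> h) ` {..<m} \<subseteq> {..<?n}" using img_bound[of h m] img_bound[of g ?k] by auto
  have "{z \<in> H ?n. reindex g ?k z \<in> {x \<in> H ?k. reindex h m x \<in> S}} =
        {z \<in> H ?n. reindex (g \<circ> h) m z \<in> S}" for S
    using reindex_H[OF g img_bound] reindex_reindex[OF img_bound] by auto
  then show "act (act \<alpha> g) h m = act \<alpha> (g \<circ> h) m"
    unfolding act_eq_reindex[OF act_in_SG[OF \<alpha> g] img_bound] act_eq_reindex[OF \<alpha> gh]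
      act_eq_reindex[OF \<alpha>, of g ?k ?n, OF img_bound]
    by auto
qed

lemma act_id:
  assumes \<alpha>: "\<alpha> \<in> SG" shows "act \<alpha> id = \<alpha>"
proof
  fix m
  have "{x \<in> H m. reindex id m x \<in> S} = S" if "S \<subseteq> H m" for S
    using that reindex_id by auto
  moreover have "S \<subseteq> H m" if "S \<in> \<alpha> m" for S
    using that ultrafilter_on_subset[OF SG_ultrafilter[OF \<alpha>]] by blast
  moreover have "id ` {..<m} \<subseteq> {..<m}" by auto
  ultimately show "act \<alpha> id m = \<alpha> m"
    using act_eq_reindex[OF \<alpha>, of id m m] by auto
qed

definition SG_of_ultrafilter :: "(nat \<Rightarrow> nat) set set \<Rightarrow> nat \<Rightarrow> nat list set set" where
  "SG_of_ultrafilter U n = {S. S \<subseteq> H n \<and> {e. inj e \<and> init_tuple e n \<in> S} \<in> U}"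

lemma SG_of_ultrafilter_in_SG:
  assumes U: "is_ultrafilter_on {e. inj e} U"
  shows "SG_of_ultrafilter U \<in> SG"
  unfolding SG_def
proof (intro CollectI conjI allI impI)
  fix n
  have "SG_of_ultrafilter U n = {S. S \<subseteq> H n \<and> {e \<in> {e. inj e}. init_tuple e n \<in> S} \<in> U}"
    by (simp add: SG_of_ultrafilter_def)
  then show "is_ultrafilter_on (H n) (SG_of_ultrafilter U n)"
    using ultrafilter_on_vimage[OF U, of "\<lambda>e. init_tuple e n"] init_tuple_H by simp
next
  fix m n S assume "m \<le> n" "S \<subseteq> H m"
  moreover have "{e. inj e \<and> init_tuple e n \<in> {x \<in> H n. take m x \<in> S}} = {e. inj e \<and> init_tuple e m \<in> S}"
    using \<open>m \<le> n\<close> init_tuple_H take_init_tuple by auto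
  ultimately show "S \<in> SG_of_ultrafilter U m \<longleftrightarrow> {x \<in> H n. take m x \<in> S} \<in> SG_of_ultrafilter U n"
    by (simp add: SG_of_ultrafilter_def)
qed

definition forces :: "(nat \<Rightarrow> nat list set set) \<Rightarrow> (nat \<Rightarrow> nat) set \<Rightarrow> bool" where
  "forces \<gamma> X \<longleftrightarrow> (\<forall>n K. K \<subseteq> H n \<longrightarrow> (\<forall>e\<in>X. init_tuple e n \<in> K) \<longrightarrow> K \<in> \<gamma> n)"

lemma forcesD: "forces \<gamma> X \<Longrightarrow> K \<subseteq> H n \<Longrightarrow> (\<And>e. e \<in> X \<Longrightarrow> init_tuple e n \<in> K) \<Longrightarrow> K \<in> \<gamma> n"
  by (auto simp: forces_def)

text \<open>Compactness of \<open>S(G)\<close>: the point is the image of an ultrafilter on the injections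
  \<open>\<omega> \<rightarrow> \<omega>\<close> that extends the family.\<close>

lemma SG_point_from_filter_base:
  assumes ne: "B \<noteq> {}" and inj: "\<And>X. X \<in> B \<Longrightarrow> X \<subseteq> {e. inj e}" and empty: "{} \<notin> B"
    and dir: "downward_directed B"
  shows "\<exists>\<gamma>\<in>SG. \<forall>X\<in>B. forces \<gamma> X"
proof -
  let ?F = "up_closure {e. inj e} B"
  have "is_filter_on {e. inj e} ?F" using ne inj dir by (intro is_filter_on_up_closure) auto
  moreover have "{} \<notin> ?F" using empty by (auto simp: up_closure_def)
  ultimately obtain U where U: "is_ultrafilter_on {e. inj e} U" "?F \<subseteq> U"
    using ultrafilter_on_extends_filter by blast
  have "forces (SG_of_ultrafilter U) X" if X: "X \<in> B" for X
    unfolding forces_def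
  proof (intro allI impI)
    fix n K assume K: "K \<subseteq> H n" and XK: "\<forall>e\<in>X. init_tuple e n \<in> K"
    have "{e. inj e \<and> init_tuple e n \<in> K} \<in> ?F"
      using X XK inj[OF X] unfolding up_closure_def by (intro CollectI conjI bexI[of _ X]) auto
    then show "K \<in> SG_of_ultrafilter U n" using K U(2) by (auto simp: SG_of_ultrafilter_def)
  qed
  then show ?thesis using SG_of_ultrafilter_in_SG[OF U(1)] by blast
qed

definition homogeneous :: "nat \<Rightarrow> nat set set \<Rightarrow> nat set \<Rightarrow> bool" where
  "homogeneous m A X \<longleftrightarrow> (\<forall>C\<subseteq>X. card C = m \<longrightarrow> C \<in> A)"

lemma homogeneous_subset: "X' \<subseteq> X \<Longrightarrow> homogeneous m A X \<Longrightarrow> homogeneous m A X'"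
  unfolding homogeneous_def by blast

lemma homogeneous_mono: "A \<subseteq> A' \<Longrightarrow> homogeneous m A X \<Longrightarrow> homogeneous m A' X"
  unfolding homogeneous_def by blast

lemma homogeneous_UNIV [simp]: "homogeneous m UNIV X"
  by (simp add: homogeneous_def)

definition hom_test :: "nat \<Rightarrow> nat set set \<Rightarrow> nat \<Rightarrow> nat list set \<Rightarrow> (nat \<Rightarrow> nat) set" where
  "hom_test m A N C = {e. inj e \<and> init_tuple e N \<in> C \<and> homogeneous m A (e ` {..<N})}"

lemma hom_test_refine:
  assumes N: "N1 \<le> N" "N2 \<le> N" and C: "\<forall>x\<in>C. take N1 x \<in> C1 \<and> take N2 x \<in> C2"
    and A: "A \<subseteq> A1" "A \<subseteq> A2"
  shows "hom_test m A N C \<subseteq> hom_test m A1 N1 C1 \<inter> hom_test m A2 N2 C2"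
proof
  fix e assume "e \<in> hom_test m A N C"
  then have e: "inj e" "take N1 (init_tuple e N) \<in> C1" "take N2 (init_tuple e N) \<in> C2"
    "homogeneous m A (e ` {..<N})"
    using C by (auto simp: hom_test_def)
  have "homogeneous m A1 (e ` {..<N1})"
    using N(1) by (intro homogeneous_mono[OF A(1)] homogeneous_subset[OF _ e(4)]) auto
  moreover have "homogeneous m A2 (e ` {..<N2})"
    using N(2) by (intro homogeneous_mono[OF A(2)] homogeneous_subset[OF _ e(4)]) auto
  ultimately show "e \<in> hom_test m A1 N1 C1 \<inter> hom_test m A2 N2 C2"
    using e(1-3) by (simp add: hom_test_def take_init_tuple[OF N(1)] take_init_tuple[OF N(2)])
qed

lemma hom_test_nonempty:
  assumes "x \<in> C" "x \<in> H N" "homogeneous m A (set x)"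
  shows "hom_test m A N C \<noteq> {}"
proof -
  obtain e where "inj e" "init_tuple e N = x" using H_eq_init_tuple[OF assms(2)] by blast
  then have "e \<in> hom_test m A N C" using assms by (auto simp: hom_test_def set_init_tuple)
  then show ?thesis by blast
qed

section \<open>Closed sets and subflows\<close>

lemma closed_SG_memI:
  assumes C: "closed_SG C" and \<gamma>: "\<gamma> \<in> SG" and FY: "\<And>n B. B \<in> FY C n \<Longrightarrow> B \<in> \<gamma> n"
  shows "\<gamma> \<in> C"
proof (rule ccontr)
  assume "\<gamma> \<notin> C"
  then have "\<gamma> \<in> SG - C" using \<gamma> by blast
  then obtain m A where A: "A \<subseteq> H m" "A \<in> \<gamma> m" "\<forall>\<beta>\<in>C. A \<notin> \<beta> m"
    using C unfolding closed_SG_def by blast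
  have "C \<subseteq> SG" using C by (simp add: closed_SG_def)
  then have "H m - A \<in> \<beta> m" if "\<beta> \<in> C" for \<beta>
    using ultrafilter_on_Diff_iff[OF SG_ultrafilter[of \<beta>] A(1)] A(3) that by blast
  then have "H m - A \<in> FY C m" by (auto simp: FY_def)
  then have "H m - A \<in> \<gamma> m" by (rule FY)
  then show False using A ultrafilter_on_Diff_iff[OF SG_ultrafilter[OF \<gamma>]] by blast
qed

lemma closed_SG_Inter:
  assumes "\<C> \<noteq> {}" "\<And>C. C \<in> \<C> \<Longrightarrow> closed_SG C"
  shows "closed_SG (\<Inter>\<C>)"
  unfolding closed_SG_def
proof (intro conjI ballI)
  show "\<Inter>\<C> \<subseteq> SG" using assms by (auto simp: closed_SG_def)
next
  fix \<alpha> assume "\<alpha> \<in> SG - \<Inter>\<C>"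
  then obtain C where C: "C \<in> \<C>" "\<alpha> \<in> SG - C" by blast
  then obtain m A where "A \<subseteq> H m" "A \<in> \<alpha> m" "\<forall>\<beta>\<in>C. A \<notin> \<beta> m"
    using assms(2)[OF C(1)] unfolding closed_SG_def by blast
  then show "\<exists>m A. A \<subseteq> H m \<and> A \<in> \<alpha> m \<and> (\<forall>\<beta>\<in>\<Inter>\<C>. A \<notin> \<beta> m)"
    using \<open>C \<in> \<C>\<close> by blast
qed

lemma closed_SG_Int:
  assumes "closed_SG A" "closed_SG B" shows "closed_SG (A \<inter> B)"
proof -
  have "closed_SG (\<Inter>{A, B})" by (rule closed_SG_Inter) (use assms in auto)
  then show ?thesis by simp
qed

lemma subflowD:
  assumes "subflow Y"
  shows "Y \<subseteq> SG" "Y \<noteq> {}" "closed_SG Y" "invariant_SG Y"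
  using assms by (auto simp: subflow_def closed_SG_def)

lemma FY_top: "Y \<subseteq> SG \<Longrightarrow> H n \<in> FY Y n"
  by (auto simp: FY_def intro: ultrafilter_on_top[OF SG_ultrafilter])

lemma is_filter_on_FY:
  assumes Y: "Y \<subseteq> SG" shows "is_filter_on (H n) (FY Y n)"
  unfolding is_filter_on_def
proof (intro conjI allI impI)
  show "H n \<in> FY Y n" using FY_top[OF Y] .
next
  fix A B assume "A \<in> FY Y n" "B \<in> FY Y n"
  then show "A \<inter> B \<in> FY Y n"
    using Y ultrafilter_on_Int[OF SG_ultrafilter] by (auto simp: FY_def)
next
  fix A B assume A: "A \<in> FY Y n" and AB: "A \<subseteq> B" "B \<subseteq> H n"
  have "B \<in> \<alpha> n" if "\<alpha> \<in> Y" for \<alpha>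
    using ultrafilter_on_mono[OF SG_ultrafilter[of \<alpha> n] _ AB] A that Y by (auto simp: FY_def)
  then show "B \<in> FY Y n" using AB(2) by (auto simp: FY_def)
qed (auto simp: FY_def)

lemma FY_antimono: "Y' \<subseteq> Y \<Longrightarrow> FY Y n \<subseteq> FY Y' n"
  by (auto simp: FY_def)

lemma FY_common_refinement:
  assumes Y: "Y \<subseteq> SG" and C1: "C1 \<in> FY Y N1" and C2: "C2 \<in> FY Y N2"
  shows "\<exists>N C. N1 \<le> N \<and> N2 \<le> N \<and> C \<in> FY Y N \<and> (\<forall>x\<in>C. take N1 x \<in> C1 \<and> take N2 x \<in> C2)"
proof (intro exI conjI)
  let ?N = "max N1 N2"
  let ?C = "{x \<in> H ?N. take N1 x \<in> C1 \<and> take N2 x \<in> C2}"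
  have "?C \<in> \<alpha> ?N" if "\<alpha> \<in> Y" for \<alpha>
  proof -
    have \<alpha>: "\<alpha> \<in> SG" using that Y by blast
    have "C1 \<in> \<alpha> N1" "C1 \<subseteq> H N1" "C2 \<in> \<alpha> N2" "C2 \<subseteq> H N2"
      using C1 C2 that by (auto simp: FY_def)
    then have "{x \<in> H ?N. take N1 x \<in> C1} \<in> \<alpha> ?N" "{x \<in> H ?N. take N2 x \<in> C2} \<in> \<alpha> ?N"
      using SG_coherent[OF \<alpha>, of N1 ?N C1] SG_coherent[OF \<alpha>, of N2 ?N C2] by simp_all
    moreover have "?C = {x \<in> H ?N. take N1 x \<in> C1} \<inter> {x \<in> H ?N. take N2 x \<in> C2}" by blast
    ultimately show ?thesis using ultrafilter_on_Int[OF SG_ultrafilter[OF \<alpha>]] by simp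
  qed
  then show "?C \<in> FY Y ?N" by (auto simp: FY_def)
qed auto

definition hom_tests :: "nat \<Rightarrow> nat set set \<Rightarrow> (nat \<Rightarrow> nat list set set) set \<Rightarrow> (nat \<Rightarrow> nat) set set" where
  "hom_tests m A Y = {hom_test m A N C | N C. C \<in> FY Y N}"

lemma hom_test_in_hom_tests: "C \<in> FY Y N \<Longrightarrow> hom_test m A N C \<in> hom_tests m A Y"
  by (auto simp: hom_tests_def)

lemma hom_tests_antimono:
  assumes "Y \<subseteq> Y'" shows "hom_tests m A Y' \<subseteq> hom_tests m A Y"
proof
  fix X assume "X \<in> hom_tests m A Y'"
  then obtain N C where "X = hom_test m A N C" "C \<in> FY Y' N" unfolding hom_tests_def by blast
  then show "X \<in> hom_tests m A Y" using FY_antimono[OF assms] hom_test_in_hom_tests by blast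
qed

lemma downward_directed_hom_tests:
  assumes Y: "Y \<subseteq> SG"
  shows "downward_directed (hom_tests m A Y)"
  unfolding downward_directed_def
proof (intro ballI)
  fix X1 X2 assume "X1 \<in> hom_tests m A Y" "X2 \<in> hom_tests m A Y"
  then obtain N1 C1 N2 C2 where C: "C1 \<in> FY Y N1" "C2 \<in> FY Y N2"
    and X: "X1 = hom_test m A N1 C1" "X2 = hom_test m A N2 C2" unfolding hom_tests_def by blast
  then obtain N C where N: "N1 \<le> N" "N2 \<le> N" and CN: "C \<in> FY Y N"
    and take: "\<forall>x\<in>C. take N1 x \<in> C1 \<and> take N2 x \<in> C2"
    using FY_common_refinement[OF Y] by blast
  have "hom_test m A N C \<subseteq> X1 \<inter> X2" unfolding X using N take by (rule hom_test_refine) auto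
  then show "\<exists>Z\<in>hom_tests m A Y. Z \<subseteq> X1 \<inter> X2" using hom_test_in_hom_tests[OF CN] by blast
qed

definition orbit_contains :: "nat \<Rightarrow> nat list set set \<Rightarrow> (nat \<Rightarrow> nat list set set) set" where
  "orbit_contains m P = {\<gamma> \<in> SG. \<forall>g\<in>Sinf. P \<subseteq> act \<gamma> g m}"

lemma orbit_contains_iff:
  assumes "\<gamma> \<in> SG" "P \<subseteq> Pow (H m)"
  shows "\<gamma> \<in> orbit_contains m P \<longleftrightarrow>
    (\<forall>g\<in>Sinf. \<forall>S\<in>P. {x \<in> H (img_bound g m). reindex g m x \<in> S} \<in> \<gamma> (img_bound g m))"
  using assms act_eq_reindex[OF assms(1) img_bound] by (auto simp: orbit_contains_def)

lemma orbit_contains_subset: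
  assumes "\<gamma> \<in> orbit_contains m P" shows "P \<subseteq> \<gamma> m"
proof -
  have "id \<in> Sinf" by (simp add: Sinf_def)
  then have "P \<subseteq> act \<gamma> id m" using assms by (auto simp: orbit_contains_def)
  then show ?thesis using assms act_id by (auto simp: orbit_contains_def)
qed

lemma closed_orbit_contains:
  assumes P: "P \<subseteq> Pow (H m)"
  shows "closed_SG (orbit_contains m P)"
  unfolding closed_SG_def
proof (intro conjI ballI)
  fix \<alpha> assume "\<alpha> \<in> SG - orbit_contains m P"
  then have \<alpha>: "\<alpha> \<in> SG" "\<alpha> \<notin> orbit_contains m P" by auto
  then obtain g S where g: "g \<in> Sinf" "S \<in> P"
    and notin: "{x \<in> H (img_bound g m). reindex g m x \<in> S} \<notin> \<alpha> (img_bound g m)"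
    using orbit_contains_iff[OF \<alpha>(1) P] by auto
  let ?K = "{x \<in> H (img_bound g m). reindex g m x \<in> S}"
  have "H (img_bound g m) - ?K \<in> \<alpha> (img_bound g m)"
    using notin ultrafilter_on_Diff_iff[OF SG_ultrafilter[OF \<alpha>(1)], of ?K] by auto
  moreover have "H (img_bound g m) - ?K \<notin> \<beta> (img_bound g m)" if \<beta>: "\<beta> \<in> orbit_contains m P" for \<beta>
  proof -
    have "\<beta> \<in> SG" using \<beta> by (simp add: orbit_contains_def)
    then have "?K \<in> \<beta> (img_bound g m)" using \<beta> g orbit_contains_iff[OF _ P] by blast
    then show ?thesis using ultrafilter_on_Diff_iff[OF SG_ultrafilter[OF \<open>\<beta> \<in> SG\<close>], of ?K] by auto
  qed
  ultimately show "\<exists>n A. A \<subseteq> H n \<and> A \<in> \<alpha> n \<and> (\<forall>\<beta>\<in>orbit_contains m P. A \<notin> \<beta> n)"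
    by (intro exI[of _ "img_bound g m"] exI[of _ "H (img_bound g m) - ?K"]) auto
qed (auto simp: orbit_contains_def)

lemma invariant_orbit_contains: "invariant_SG (orbit_contains m P)"
  unfolding invariant_SG_def
proof (intro ballI)
  fix \<gamma> h assume \<gamma>: "\<gamma> \<in> orbit_contains m P" and h: "h \<in> Sinf"
  then have "\<gamma> \<in> SG" "inj h" by (auto simp: orbit_contains_def Sinf_def bij_def)
  moreover have "h \<circ> g \<in> Sinf" if "g \<in> Sinf" for g
    using that h by (auto simp: Sinf_def bij_comp)
  ultimately show "act \<gamma> h \<in> orbit_contains m P"
    using \<gamma> act_in_SG act_act by (auto simp: orbit_contains_def)
qed

lemma minimal_subflow_FY_if_meets_orbit:
  assumes M: "minimal_subflow M" and P: "P \<subseteq> Pow (H m)" and meet: "M \<inter> orbit_contains m P \<noteq> {}"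
  shows "P \<subseteq> FY M m"
proof -
  have "subflow (M \<inter> orbit_contains m P)"
    using M meet closed_SG_Int[OF _ closed_orbit_contains[OF P]] invariant_orbit_contains[of m P]
    by (auto simp: minimal_subflow_def subflow_def invariant_SG_def)
  then have "M \<subseteq> orbit_contains m P" using M by (auto simp: minimal_subflow_def)
  then show ?thesis using P orbit_contains_subset unfolding FY_def by blast
qed

lemma FY_nonempty:
  assumes "subflow Y" "C \<in> FY Y N"
  shows "C \<noteq> {}"
proof -
  obtain \<beta> where "\<beta> \<in> Y" using subflowD(2)[OF assms(1)] by blast
  then have "C \<in> \<beta> N" "\<beta> \<in> SG" using assms subflowD(1) by (auto simp: FY_def)
  then show ?thesis using ultrafilter_on_empty[OF SG_ultrafilter] by fastforce
qed

lemma SG_point_forcing_chain: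
  assumes ne: "\<Y> \<noteq> {}" and sf: "\<And>Y. Y \<in> \<Y> \<Longrightarrow> subflow Y"
    and chain: "\<And>Y Y'. Y \<in> \<Y> \<Longrightarrow> Y' \<in> \<Y> \<Longrightarrow> Y \<subseteq> Y' \<or> Y' \<subseteq> Y"
  shows "\<exists>\<gamma>\<in>SG. \<forall>X\<in>\<Union>(hom_tests 0 UNIV ` \<Y>). forces \<gamma> X"
proof (rule SG_point_from_filter_base)
  \<comment> \<open>\<open>hom_test 0 UNIV N C\<close> only asks for the initial \<open>N\<close>-tuple to lie in \<open>C\<close>.\<close>
  obtain Y where "Y \<in> \<Y>" using ne by blast
  then have "hom_test 0 UNIV 0 (H 0) \<in> hom_tests 0 UNIV Y"
    using FY_top[OF subflowD(1)[OF sf]] by (intro hom_test_in_hom_tests)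
  then show "\<Union>(hom_tests 0 UNIV ` \<Y>) \<noteq> {}" using \<open>Y \<in> \<Y>\<close> by blast
next
  show "X \<subseteq> {e. inj e}" if "X \<in> \<Union>(hom_tests 0 UNIV ` \<Y>)" for X
    using that by (auto simp: hom_tests_def hom_test_def)
next
  show "{} \<notin> \<Union>(hom_tests 0 UNIV ` \<Y>)"
  proof
    assume "{} \<in> \<Union>(hom_tests 0 UNIV ` \<Y>)"
    then obtain Y N C where YC: "Y \<in> \<Y>" "C \<in> FY Y N" and empty: "hom_test 0 UNIV N C = {}"
      by (auto simp: hom_tests_def)
    then obtain x where "x \<in> C" using FY_nonempty[OF sf] by blast
    then show False using hom_test_nonempty[of x C N 0 UNIV] empty YC(2) by (auto simp: FY_def)
  qed
next
  show "downward_directed (\<Union>(hom_tests 0 UNIV ` \<Y>))"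
  proof (rule downward_directed_Union)
    fix B assume "B \<in> hom_tests 0 UNIV ` \<Y>"
    then obtain Y where "Y \<in> \<Y>" "B = hom_tests 0 UNIV Y" by blast
    then show "downward_directed B" using downward_directed_hom_tests subflowD(1)[OF sf] by simp
  next
    fix B B' assume "B \<in> hom_tests 0 UNIV ` \<Y>" "B' \<in> hom_tests 0 UNIV ` \<Y>"
    then obtain Y Y' where "Y \<in> \<Y>" "Y' \<in> \<Y>" "B = hom_tests 0 UNIV Y" "B' = hom_tests 0 UNIV Y'" by blast
    then show "B \<subseteq> B' \<or> B' \<subseteq> B" using chain hom_tests_antimono by metis
  qed
qed

lemma Inter_chain_subflows_nonempty:
  assumes ne: "\<Y> \<noteq> {}" and sf: "\<And>Y. Y \<in> \<Y> \<Longrightarrow> subflow Y"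
    and chain: "\<And>Y Y'. Y \<in> \<Y> \<Longrightarrow> Y' \<in> \<Y> \<Longrightarrow> Y \<subseteq> Y' \<or> Y' \<subseteq> Y"
  shows "\<Inter>\<Y> \<noteq> {}"
proof -
  from SG_point_forcing_chain[OF assms] obtain \<gamma> where \<gamma>: "\<gamma> \<in> SG"
    and forced: "\<forall>X\<in>\<Union>(hom_tests 0 UNIV ` \<Y>). forces \<gamma> X" ..
  have "\<gamma> \<in> Y" if Y: "Y \<in> \<Y>" for Y
  proof (rule closed_SG_memI[OF subflowD(3)[OF sf[OF Y]] \<gamma>])
    fix n K assume K: "K \<in> FY Y n"
    then have "forces \<gamma> (hom_test 0 UNIV n K)" using forced hom_test_in_hom_tests Y by blast
    then show "K \<in> \<gamma> n" by (rule forcesD) (use K in \<open>auto simp: FY_def hom_test_def\<close>)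
  qed
  then show ?thesis by blast
qed

lemma subflow_Inter_chain:
  assumes ne: "\<Y> \<noteq> {}" and sf: "\<And>Y. Y \<in> \<Y> \<Longrightarrow> subflow Y"
    and chain: "\<And>Y Y'. Y \<in> \<Y> \<Longrightarrow> Y' \<in> \<Y> \<Longrightarrow> Y \<subseteq> Y' \<or> Y' \<subseteq> Y"
  shows "subflow (\<Inter>\<Y>)"
proof -
  have "closed_SG (\<Inter>\<Y>)" using ne sf subflowD(3) by (intro closed_SG_Inter) auto
  moreover have "invariant_SG (\<Inter>\<Y>)" using sf subflowD(4) by (auto simp: invariant_SG_def)
  ultimately show ?thesis using Inter_chain_subflows_nonempty[OF assms] by (simp add: subflow_def)
qed

lemma minimal_subflow_exists:
  assumes Y0: "subflow Y0"
  obtains M where "minimal_subflow M" "M \<subseteq> Y0"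
proof -
  let ?A = "{Y. subflow Y \<and> Y \<subseteq> Y0}"
  have "\<exists>M\<in>?A. \<forall>Y\<in>?A. Y \<subseteq> M \<longrightarrow> Y = M"
  proof (rule predicate_Zorn)
    show "partial_order_on ?A (relation_of (\<lambda>Y Z. Z \<subseteq> Y) ?A)"
      by (rule partial_order_on_relation_ofI) auto
  next
    fix \<C> assume \<C>: "\<C> \<in> Chains (relation_of (\<lambda>Y Z. Z \<subseteq> Y) ?A)"
    then have sub: "\<C> \<subseteq> ?A" by (rule Chains_relation_of)
    have chain: "Y \<subseteq> Y' \<or> Y' \<subseteq> Y" if "Y \<in> \<C>" "Y' \<in> \<C>" for Y Y'
      using \<C> that by (auto simp: Chains_def relation_of_def)
    show "\<exists>U\<in>?A. \<forall>Y\<in>\<C>. U \<subseteq> Y"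
    proof (cases "\<C> = {}")
      case True
      then show ?thesis using Y0 by blast
    next
      case False
      then have "\<Inter>\<C> \<in> ?A" using sub chain subflow_Inter_chain[of \<C>] by blast
      then show ?thesis by blast
    qed
  qed
  then obtain M where "M \<in> ?A" and min: "\<forall>Y\<in>?A. Y \<subseteq> M \<longrightarrow> Y = M" ..
  then have "minimal_subflow M" by (auto simp: minimal_subflow_def)
  then show ?thesis using \<open>M \<in> ?A\<close> that by blast
qed

section \<open>Thick sets\<close>

lemma thick_H_mono: "thick_H m A \<Longrightarrow> A \<subseteq> B \<Longrightarrow> B \<subseteq> H m \<Longrightarrow> thick_H m B"
  unfolding thick_H_def by (meson order_trans)

lemma thick_H_FY:
  assumes Y: "subflow Y" and B: "B \<in> FY Y m"
  shows "thick_H m B"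
  unfolding thick_H_def
proof (intro conjI allI impI)
  show "B \<subseteq> H m" using B by (auto simp: FY_def)
  fix n assume "m \<le> n"
  obtain \<alpha> where "\<alpha> \<in> Y" using subflowD(2)[OF Y] by blast
  then have \<alpha>: "\<alpha> \<in> SG" using subflowD(1)[OF Y] by blast
  \<comment> \<open>Each embedding \<open>f\<close> is the restriction of a permutation \<open>g\<close>, and \<open>B\<close> lies in \<open>(\<alpha> g)(m)\<close>.\<close>
  have "{x \<in> H n. comp_tuple x f \<in> B} \<in> \<alpha> n" if f: "f \<in> Emb m n" for f
  proof -
    obtain g where g: "g \<in> Sinf" "\<And>i. i < m \<Longrightarrow> g i = f ! i" using Emb_extends_to_Sinf[OF f] by blast
    have f': "length f = m" "set f \<subseteq> {..<n}" using f by (auto simp: Emb_def)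
    have gb: "g ` {..<m} \<subseteq> {..<n}" using g(2) f' nth_mem[of _ f] by fastforce
    have "act \<alpha> g \<in> Y" using subflowD(4)[OF Y] \<open>\<alpha> \<in> Y\<close> g(1) by (auto simp: invariant_SG_def)
    then have "B \<in> act \<alpha> g m" using B by (auto simp: FY_def)
    then have "{x \<in> H n. reindex g m x \<in> B} \<in> \<alpha> n" unfolding act_eq_reindex[OF \<alpha> gb] by simp
    moreover have "reindex g m x = comp_tuple x f" for x
      using g(2) f' by (auto simp: reindex_def comp_tuple_def intro: nth_equalityI)
    ultimately show ?thesis by simp
  qed
  then have "H n \<inter> (\<Inter>f\<in>Emb m n. {x \<in> H n. comp_tuple x f \<in> B}) \<in> \<alpha> n"
    by (rule ultrafilter_on_INT[OF SG_ultrafilter[OF \<alpha>] finite_Emb])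
  moreover have "{} \<notin> \<alpha> n" by (rule ultrafilter_on_empty[OF SG_ultrafilter[OF \<alpha>]])
  ultimately have "H n \<inter> (\<Inter>f\<in>Emb m n. {x \<in> H n. comp_tuple x f \<in> B}) \<noteq> {}" by force
  then show "\<exists>s\<in>H n. comp_tuple s ` Emb m n \<subseteq> B" by blast
qed

lemma thick_H_contains_reorderings:
  assumes "thick_H m T"
  shows "\<exists>s\<in>H m. \<forall>y\<in>H m. set y = set s \<longrightarrow> y \<in> T"
proof -
  obtain s where s: "s \<in> H m" "comp_tuple s ` Emb m m \<subseteq> T"
    using assms unfolding thick_H_def by blast
  have "y \<in> T" if y: "y \<in> H m" "set y = set s" for y
  proof -
    obtain f where "f \<in> Emb m m" "comp_tuple s f = y"
      using subtuple_eq_comp_tuple[OF s(1) y(1) equalityD1[OF y(2)]] by blast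
    then show ?thesis using s(2) by blast
  qed
  then show ?thesis using s(1) by blast
qed

lemma phi_pre_subset: "phi_pre m A \<subseteq> H m"
  by (auto simp: phi_pre_def)

lemma phi_pre_Int: "phi_pre m (A \<inter> B) = phi_pre m A \<inter> phi_pre m B"
  by (auto simp: phi_pre_def)

lemma phi_pre_mono: "A \<subseteq> B \<Longrightarrow> phi_pre m A \<subseteq> phi_pre m B"
  by (auto simp: phi_pre_def)

lemma phi_pre_msets: "phi_pre m (msets m) = H m"
  by (auto simp: phi_pre_def phi_def msets_def card_set_H)

lemma phi_filter_eq: "phi_filter m F = {T. T \<subseteq> msets m \<and> phi_pre m T \<in> F}"
  by (simp add: phi_filter_def phi_pre_def)

lemma is_filter_on_phi_filter:
  assumes F: "is_filter_on (H m) F"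
  shows "is_filter_on (msets m) (phi_filter m F)"
  unfolding is_filter_on_def phi_filter_eq
proof (intro conjI allI impI)
  show "msets m \<in> {T. T \<subseteq> msets m \<and> phi_pre m T \<in> F}"
    using F by (simp add: phi_pre_msets is_filter_on_def)
next
  fix A B assume "A \<in> {T. T \<subseteq> msets m \<and> phi_pre m T \<in> F}" "B \<in> {T. T \<subseteq> msets m \<and> phi_pre m T \<in> F}"
  then show "A \<inter> B \<in> {T. T \<subseteq> msets m \<and> phi_pre m T \<in> F}"
    using F by (auto simp: phi_pre_Int is_filter_on_def)
next
  fix A B assume "A \<in> {T. T \<subseteq> msets m \<and> phi_pre m T \<in> F}" "A \<subseteq> B" "B \<subseteq> msets m"
  then show "B \<in> {T. T \<subseteq> msets m \<and> phi_pre m T \<in> F}"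
    using F phi_pre_mono[of A B m] phi_pre_subset[of m B] by (auto simp: is_filter_on_def)
qed auto

lemma thick_S_if_thick_H_phi_pre:
  assumes T: "T \<subseteq> msets m" and th: "thick_H m (phi_pre m T)"
  shows "thick_S m T"
  unfolding thick_S_def
proof (intro conjI allI impI T)
  fix n assume "m \<le> n"
  then obtain s where s: "s \<in> H n" "comp_tuple s ` Emb m n \<subseteq> phi_pre m T"
    using th unfolding thick_H_def by blast
  have "B \<in> T" if B: "B \<subseteq> set s" "B \<in> msets m" for B
  proof -
    have y: "sorted_list_of_set B \<in> H m" "set (sorted_list_of_set B) \<subseteq> set s"
      using B by (auto simp: H_def msets_def)
    then obtain f where "f \<in> Emb m n" "comp_tuple s f = sorted_list_of_set B"
      using subtuple_eq_comp_tuple[OF s(1) y] by blast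
    then have "sorted_list_of_set B \<in> phi_pre m T" using s(2) by force
    then show "B \<in> T" using B(2) by (auto simp: phi_pre_def phi_def msets_def)
  qed
  moreover have "set s \<in> msets n" using s(1) by (simp add: msets_def card_set_H)
  ultimately show "\<exists>s\<in>msets n. {B. B \<subseteq> s \<and> B \<in> msets m} \<subseteq> T" by blast
qed

lemma thick_H_phi_pre_if_thick_S:
  assumes th: "thick_S m T"
  shows "thick_H m (phi_pre m T)"
  unfolding thick_H_def
proof (intro conjI allI impI phi_pre_subset)
  fix n assume "m \<le> n"
  then obtain s where s: "s \<in> msets n" "{B. B \<subseteq> s \<and> B \<in> msets m} \<subseteq> T"
    using th unfolding thick_S_def by blast
  let ?x = "sorted_list_of_set s"
  have x: "?x \<in> H n" "set ?x = s" using s(1) by (auto simp: H_def msets_def)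
  have "comp_tuple ?x f \<in> phi_pre m T" if f: "f \<in> Emb m n" for f
  proof -
    have z: "comp_tuple ?x f \<in> H m" "set (comp_tuple ?x f) \<subseteq> s" using comp_tuple_H[OF x(1) f] x(2) by auto
    then have "set (comp_tuple ?x f) \<in> T" using s(2) by (auto simp: msets_def card_set_H)
    then show ?thesis using z(1) by (simp add: phi_pre_def phi_def)
  qed
  then show "\<exists>s\<in>H n. comp_tuple s ` Emb m n \<subseteq> phi_pre m T" using x(1) by blast
qed

section \<open>Ramsey's theorem for homogeneous tuples\<close>

lemma homogeneous_image_dichotomy:
  assumes h: "inj_on h J" and J: "finite J" and mono: "\<forall>I\<in>nsets J m. h ` I \<in> A \<longleftrightarrow> b"
  shows "homogeneous m A (h ` J) \<or> homogeneous m (msets m - A) (h ` J)"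
proof -
  have "C \<in> A \<longleftrightarrow> b" "finite C" if C: "C \<subseteq> h ` J" "card C = m" for C
  proof -
    have img: "h ` (J \<inter> h -` C) = C" using C(1) by auto
    moreover have "inj_on h (J \<inter> h -` C)" using inj_on_subset[OF h] by blast
    ultimately have "card (J \<inter> h -` C) = m" using C(2) card_image by metis
    then have "J \<inter> h -` C \<in> nsets J m" using J by (auto simp: nsets_def)
    then have "h ` (J \<inter> h -` C) \<in> A \<longleftrightarrow> b" using mono by blast
    then show "C \<in> A \<longleftrightarrow> b" using img by simp
    show "finite C" using C(1) J finite_surj by blast
  qed
  then show ?thesis by (cases b) (auto simp: homogeneous_def msets_def)
qed

lemma ramsey_homogeneous_image:
  "\<exists>n\<ge>N. \<forall>h. inj_on h {..<n} \<longrightarrow>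
     (\<exists>J\<subseteq>{..<n}. card J = N \<and> (homogeneous m A (h ` J) \<or> homogeneous m (msets m - A) (h ` J)))"
proof -
  obtain n' :: nat where "partn_lst {..<n'} [N, N] m" using ramsey_full by blast
  then have R: "partn_lst {..<max n' N} [N, N] m" by (rule partn_lst_greater_resource) simp
  have "\<exists>J\<subseteq>{..<max n' N}. card J = N \<and> (homogeneous m A (h ` J) \<or> homogeneous m (msets m - A) (h ` J))"
    if h: "inj_on h {..<max n' N}" for h
  proof -
    define col where "col I = (if h ` I \<in> A then 0 else 1 :: nat)" for I
    have "col \<in> nsets {..<max n' N} m \<rightarrow> {..<length [N, N]}" by (auto simp: col_def)
    then obtain i J where i: "i < length [N, N]" and J: "J \<in> nsets {..<max n' N} ([N, N] ! i)"
      and mono: "col ` nsets J m \<subseteq> {i}"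
      by (rule partn_lstE[OF R]) auto
    have J': "J \<subseteq> {..<max n' N}" "finite J" "card J = N"
      using J i by (auto simp: nsets_def less_Suc_eq)
    have "\<forall>I\<in>nsets J m. h ` I \<in> A \<longleftrightarrow> i = 0"
      using mono i by (auto simp: col_def less_Suc_eq split: if_splits)
    then have "homogeneous m A (h ` J) \<or> homogeneous m (msets m - A) (h ` J)"
      using inj_on_subset[OF h J'(1)] J'(2) by (intro homogeneous_image_dichotomy)
    then show ?thesis using J' by blast
  qed
  then show ?thesis by (intro exI[of _ "max n' N"]) auto
qed

lemma thick_H_homogeneous:
  assumes B: "thick_H N B"
  shows "\<exists>x\<in>B. homogeneous m A (set x) \<or> homogeneous m (msets m - A) (set x)"
proof -
  obtain n where "N \<le> n" and R: "\<forall>h. inj_on h {..<n} \<longrightarrow>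
      (\<exists>J\<subseteq>{..<n}. card J = N \<and> (homogeneous m A (h ` J) \<or> homogeneous m (msets m - A) (h ` J)))"
    using ramsey_homogeneous_image by blast
  then obtain s where s: "s \<in> H n" "comp_tuple s ` Emb N n \<subseteq> B"
    using B unfolding thick_H_def by blast
  then have "inj_on ((!) s) {..<n}" by (intro inj_on_nth) (auto simp: H_def)
  then obtain J where J: "J \<subseteq> {..<n}" "card J = N"
    and hom: "homogeneous m A ((!) s ` J) \<or> homogeneous m (msets m - A) ((!) s ` J)"
    using R by blast
  have fin: "finite J" using J(1) finite_subset by blast
  let ?x = "comp_tuple s (sorted_list_of_set J)"
  have "sorted_list_of_set J \<in> Emb N n" using J fin by (auto simp: Emb_def)
  then have "?x \<in> B" using s(2) by blast
  moreover have "set ?x = (!) s ` J" using fin by (simp add: comp_tuple_def)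
  ultimately show ?thesis using hom by (metis (no_types))
qed

lemma thick_S_homogeneous:
  fixes N :: nat
  assumes S: "thick_S m S"
  obtains e where "inj e" "homogeneous m S (e ` {..<N})"
proof -
  obtain s where s: "s \<in> msets (max N m)" "{B. B \<subseteq> s \<and> B \<in> msets m} \<subseteq> S"
    using S unfolding thick_S_def by (meson max.cobounded2)
  have x: "sorted_list_of_set s \<in> H (max N m)" using s(1) by (auto simp: H_def msets_def)
  obtain e where e: "inj e" "init_tuple e (max N m) = sorted_list_of_set s"
    using H_eq_init_tuple[OF x] by blast
  then have "e ` {..<max N m} = s" using s(1) by (metis set_init_tuple mem_Collect_eq msets_def set_sorted_list_of_set)
  moreover have "homogeneous m S s"
    using s finite_subset by (fastforce simp: homogeneous_def msets_def)
  moreover have "e ` {..<N} \<subseteq> e ` {..<max N m}" by auto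
  ultimately have "homogeneous m S (e ` {..<N})" using homogeneous_subset by metis
  then show ?thesis using that e(1) by blast
qed

lemma init_tuple_reindex_phi_pre:
  assumes e: "inj e" and g: "inj g" and hom: "homogeneous m S (e ` {..<img_bound g m})"
  shows "init_tuple e (img_bound g m) \<in> {x \<in> H (img_bound g m). reindex g m x \<in> phi_pre m S}"
proof -
  have y: "reindex g m (init_tuple e (img_bound g m)) = init_tuple (e \<circ> g) m"
    by (rule reindex_init_tuple[OF img_bound])
  have "init_tuple (e \<circ> g) m \<in> H m" using e g by (intro init_tuple_H inj_compose)
  moreover have "set (init_tuple (e \<circ> g) m) \<subseteq> e ` {..<img_bound g m}"
    using img_bound[of g m] by (auto simp: set_init_tuple)
  ultimately have "init_tuple (e \<circ> g) m \<in> phi_pre m S"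
    using hom card_set_H by (auto simp: homogeneous_def phi_pre_def phi_def)
  then show ?thesis using y init_tuple_H[OF e] by simp
qed

section \<open>Minimal subflows induce thick ultrafilters\<close>

lemma orbit_contains_phi_pre_if_forces:
  assumes \<gamma>: "\<gamma> \<in> SG" and forced: "\<And>S n. S \<in> \<S> \<Longrightarrow> forces \<gamma> (hom_test m S n (H n))"
  shows "\<gamma> \<in> orbit_contains m (phi_pre m ` \<S>)"
proof -
  have P: "phi_pre m ` \<S> \<subseteq> Pow (H m)" using phi_pre_subset by blast
  show ?thesis
    unfolding orbit_contains_iff[OF \<gamma> P]
  proof (intro ballI)
    fix g S' assume g: "g \<in> Sinf" and "S' \<in> phi_pre m ` \<S>"
    then obtain S where S: "S \<in> \<S>" "S' = phi_pre m S" by blast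
    let ?n = "img_bound g m"
    have "{x \<in> H ?n. reindex g m x \<in> phi_pre m S} \<in> \<gamma> ?n"
      by (rule forcesD[OF forced[OF S(1)]])
        (use init_tuple_reindex_phi_pre g in \<open>auto simp: hom_test_def Sinf_def bij_def\<close>)
    then show "{x \<in> H ?n. reindex g m x \<in> S'} \<in> \<gamma> ?n" using S(2) by simp
  qed
qed

lemma SG_point_forcing_homogeneous:
  assumes M: "subflow M"
    and hom: "\<And>N C. C \<in> FY M N \<Longrightarrow> \<exists>x\<in>C. homogeneous m A (set x)"
  shows "\<exists>\<gamma>\<in>SG. \<forall>X\<in>hom_tests m A M. forces \<gamma> X"
proof (rule SG_point_from_filter_base)
  show "hom_tests m A M \<noteq> {}" using hom_test_in_hom_tests[OF FY_top[OF subflowD(1)[OF M]]] by blast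
  show "X \<subseteq> {e. inj e}" if "X \<in> hom_tests m A M" for X
    using that by (auto simp: hom_tests_def hom_test_def)
  show "downward_directed (hom_tests m A M)" by (rule downward_directed_hom_tests[OF subflowD(1)[OF M]])
  show "{} \<notin> hom_tests m A M"
  proof
    assume "{} \<in> hom_tests m A M"
    then obtain N C where C: "C \<in> FY M N" "hom_test m A N C = {}" by (auto simp: hom_tests_def)
    obtain x where x: "x \<in> C" "homogeneous m A (set x)" using hom[OF C(1)] by blast
    then have "x \<in> H N" using C(1) by (auto simp: FY_def)
    then show False using hom_test_nonempty[OF x(1) _ x(2)] C(2) by blast
  qed
qed

lemma subflow_meets_orbit_if_homogeneous:
  assumes M: "subflow M"
    and hom: "\<And>N C. C \<in> FY M N \<Longrightarrow> \<exists>x\<in>C. homogeneous m A (set x)"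
  shows "M \<inter> orbit_contains m {phi_pre m A} \<noteq> {}"
proof -
  from SG_point_forcing_homogeneous[OF assms] obtain \<gamma> where \<gamma>: "\<gamma> \<in> SG"
    and forced: "\<forall>X\<in>hom_tests m A M. forces \<gamma> X" ..
  have "\<gamma> \<in> M"
  proof (rule closed_SG_memI[OF subflowD(3)[OF M] \<gamma>])
    fix n K assume K: "K \<in> FY M n"
    then have "forces \<gamma> (hom_test m A n K)" using forced hom_test_in_hom_tests by blast
    then show "K \<in> \<gamma> n" by (rule forcesD) (use K in \<open>auto simp: FY_def hom_test_def\<close>)
  qed
  moreover have "forces \<gamma> (hom_test m A n (H n))" for n
    using forced hom_test_in_hom_tests[OF FY_top[OF subflowD(1)[OF M]]] by blast
  then have "\<gamma> \<in> orbit_contains m (phi_pre m ` {A})"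
    by (intro orbit_contains_phi_pre_if_forces[OF \<gamma>]) simp
  ultimately show ?thesis by auto
qed

lemma phi_pre_FY_if_homogeneous:
  assumes M: "minimal_subflow M"
    and hom: "\<And>N C. C \<in> FY M N \<Longrightarrow> \<exists>x\<in>C. homogeneous m A (set x)"
  shows "phi_pre m A \<in> FY M m"
proof -
  have "M \<inter> orbit_contains m {phi_pre m A} \<noteq> {}"
    using M hom by (intro subflow_meets_orbit_if_homogeneous) (auto simp: minimal_subflow_def)
  then have "{phi_pre m A} \<subseteq> FY M m"
    using phi_pre_subset by (intro minimal_subflow_FY_if_meets_orbit[OF M]) auto
  then show ?thesis by simp
qed

lemma subflow_homogeneous_dichotomy:
  assumes M: "subflow M"
  shows "(\<forall>N. \<forall>C\<in>FY M N. \<exists>x\<in>C. homogeneous m A (set x)) \<or>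
         (\<forall>N. \<forall>C\<in>FY M N. \<exists>x\<in>C. homogeneous m (msets m - A) (set x))"
proof (rule ccontr)
  assume "\<not> ?thesis"
  then obtain N1 C1 N2 C2 where C1: "C1 \<in> FY M N1" "\<forall>x\<in>C1. \<not> homogeneous m A (set x)"
    and C2: "C2 \<in> FY M N2" "\<forall>x\<in>C2. \<not> homogeneous m (msets m - A) (set x)" by blast
  obtain N C where "C \<in> FY M N" and take: "\<forall>x\<in>C. take N1 x \<in> C1 \<and> take N2 x \<in> C2"
    using FY_common_refinement[OF subflowD(1)[OF M] C1(1) C2(1)] by blast
  then obtain x where x: "x \<in> C" "homogeneous m A (set x) \<or> homogeneous m (msets m - A) (set x)"
    using thick_H_homogeneous[OF thick_H_FY[OF M]] by blast
  have "set (take N1 x) \<subseteq> set x" "set (take N2 x) \<subseteq> set x" by (auto dest: in_set_takeD)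
  then show False using x take C1(2) C2(2) homogeneous_subset by metis
qed

lemma thick_ultrafilter_phi_filter_FY:
  assumes M: "minimal_subflow M"
  shows "thick_ultrafilter_S m (phi_filter m (FY M m))"
proof -
  have M': "subflow M" using M by (simp add: minimal_subflow_def)
  let ?q = "phi_filter m (FY M m)"
  have "is_filter_on (msets m) ?q" by (rule is_filter_on_phi_filter[OF is_filter_on_FY[OF subflowD(1)[OF M']]])
  moreover have "{} \<notin> ?q"
  proof
    assume "{} \<in> ?q"
    then have "{} \<in> FY M m" by (simp add: phi_filter_eq phi_pre_def)
    moreover obtain \<alpha> where "\<alpha> \<in> M" using subflowD(2)[OF M'] by blast
    ultimately show False using subflowD(1)[OF M'] ultrafilter_on_empty[OF SG_ultrafilter] by (auto simp: FY_def)
  qed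
  moreover have "A \<in> ?q \<or> msets m - A \<in> ?q" if "A \<subseteq> msets m" for A
    using that subflow_homogeneous_dichotomy[OF M', of m A] phi_pre_FY_if_homogeneous[OF M]
    by (auto simp: phi_filter_eq)
  moreover have "thick_S m T" if "T \<in> ?q" for T
    using that thick_H_FY[OF M'] thick_S_if_thick_H_phi_pre by (auto simp: phi_filter_eq)
  ultimately show ?thesis by (simp add: thick_ultrafilter_S_def is_ultrafilter_on_def)
qed

section \<open>Thick ultrafilters come from minimal subflows\<close>

lemma phi_pre_image_filter_base:
  assumes p: "is_ultrafilter_on (msets m) p"
  shows "phi_pre m ` p \<noteq> {}" "phi_pre m ` p \<subseteq> Pow (H m)" "downward_directed (phi_pre m ` p)"
proof -
  show "phi_pre m ` p \<noteq> {}" using ultrafilter_on_top[OF p] by blast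
  show "phi_pre m ` p \<subseteq> Pow (H m)" using phi_pre_subset by blast
  show "downward_directed (phi_pre m ` p)"
    unfolding downward_directed_def
  proof (intro ballI)
    fix X Y assume "X \<in> phi_pre m ` p" "Y \<in> phi_pre m ` p"
    then obtain S T where ST: "S \<in> p" "T \<in> p" and XY: "X = phi_pre m S" "Y = phi_pre m T" by blast
    have "phi_pre m (S \<inter> T) \<in> phi_pre m ` p" using ultrafilter_on_Int[OF p ST] by blast
    then show "\<exists>Z\<in>phi_pre m ` p. Z \<subseteq> X \<inter> Y" using XY phi_pre_Int by (metis order_refl)
  qed
qed

lemma thick_filter_H_subset_up_closure_phi_pre:
  assumes p: "is_ultrafilter_on (msets m) p" and F: "thick_filter_H m F" and sub: "phi_pre m ` p \<subseteq> F"
  shows "F \<subseteq> up_closure (H m) (phi_pre m ` p)"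
proof
  fix T assume T: "T \<in> F"
  have Ff: "is_filter_on (H m) F" using F by (simp add: thick_filter_H_def)
  then have "T \<subseteq> H m" using T by (auto simp: is_filter_on_def)
  define S where "S = {C \<in> msets m. \<forall>y\<in>H m. set y = C \<longrightarrow> y \<in> T}"
  \<comment> \<open>A thick subset of \<open>H m\<close> contains all orderings of some tuple, so it cannot lie
    inside \<open>phi_pre m (msets m - S)\<close> and \<open>T\<close> at the same time.\<close>
  have "S \<in> p"
  proof (rule ccontr)
    assume "S \<notin> p"
    then have "msets m - S \<in> p" using ultrafilter_on_Diff_iff[OF p] by (auto simp: S_def)
    then have "phi_pre m (msets m - S) \<in> F" using sub by blast
    then have "T \<inter> phi_pre m (msets m - S) \<in> F" using Ff T by (simp add: is_filter_on_def)
    then have "thick_H m (T \<inter> phi_pre m (msets m - S))" using F by (simp add: thick_filter_H_def)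
    then obtain s where s: "s \<in> H m"
      and all: "\<forall>y\<in>H m. set y = set s \<longrightarrow> y \<in> T \<inter> phi_pre m (msets m - S)"
      using thick_H_contains_reorderings by blast
    have "set s \<notin> S" using all s by (auto simp: phi_pre_def phi_def)
    moreover have "set s \<in> msets m" using s by (simp add: msets_def card_set_H)
    ultimately show False using all by (auto simp: S_def)
  qed
  moreover have "phi_pre m S \<subseteq> T" by (auto simp: S_def phi_pre_def phi_def)
  ultimately show "T \<in> up_closure (H m) (phi_pre m ` p)"
    using \<open>T \<subseteq> H m\<close> unfolding up_closure_def by blast
qed

lemma max_thick_filter_phi_pre:
  assumes tp: "thick_ultrafilter_S m p"
  shows "max_thick_filter_H m (filter_generated (H m) (phi_pre m ` p))"
proof -
  have p: "is_ultrafilter_on (msets m) p" and thick: "\<And>S. S \<in> p \<Longrightarrow> thick_S m S"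
    using tp by (auto simp: thick_ultrafilter_S_def)
  let ?F = "up_closure (H m) (phi_pre m ` p)"
  have F: "filter_generated (H m) (phi_pre m ` p) = ?F"
    by (rule filter_generated_eq_up_closure[OF phi_pre_image_filter_base[OF p]])
  have "thick_filter_H m ?F"
    unfolding thick_filter_H_def
  proof (intro conjI ballI)
    show "is_filter_on (H m) ?F" by (rule is_filter_on_up_closure[OF phi_pre_image_filter_base[OF p]])
  next
    fix T assume "T \<in> ?F"
    then obtain S where "S \<in> p" "phi_pre m S \<subseteq> T" "T \<subseteq> H m" by (auto simp: up_closure_def)
    then show "thick_H m T"
      using thick_H_mono thick_H_phi_pre_if_thick_S thick by blast
  qed
  moreover have "F' = ?F" if "thick_filter_H m F'" "?F \<subseteq> F'" for F'
  proof
    have "phi_pre m ` p \<subseteq> ?F" using phi_pre_subset by (auto simp: up_closure_def)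
    then show "F' \<subseteq> ?F" using that by (intro thick_filter_H_subset_up_closure_phi_pre[OF p]) auto
  qed (use that in blast)
  ultimately show ?thesis unfolding max_thick_filter_H_def F by blast
qed

lemma SG_point_forcing_thick_ultrafilter:
  assumes tp: "thick_ultrafilter_S m p"
  shows "\<exists>\<gamma>\<in>SG. \<forall>X\<in>{hom_test m S N (H N) | N S. S \<in> p}. forces \<gamma> X"
proof (rule SG_point_from_filter_base)
  have p: "is_ultrafilter_on (msets m) p" and thick: "\<And>S. S \<in> p \<Longrightarrow> thick_S m S"
    using tp by (auto simp: thick_ultrafilter_S_def)
  show "{hom_test m S N (H N) | N S. S \<in> p} \<noteq> {}" using ultrafilter_on_top[OF p] by blast
  show "X \<subseteq> {e. inj e}" if "X \<in> {hom_test m S N (H N) | N S. S \<in> p}" for X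
    using that by (auto simp: hom_test_def)
  show "{} \<notin> {hom_test m S N (H N) | N S. S \<in> p}"
  proof
    assume "{} \<in> {hom_test m S N (H N) | N S. S \<in> p}"
    then obtain N S where "S \<in> p" "hom_test m S N (H N) = {}" by blast
    moreover obtain e where "inj e" "homogeneous m S (e ` {..<N})"
      using thick_S_homogeneous[OF thick[OF \<open>S \<in> p\<close>]] by blast
    ultimately show False by (auto simp: hom_test_def init_tuple_H)
  qed
  show "downward_directed {hom_test m S N (H N) | N S. S \<in> p}"
    unfolding downward_directed_def
  proof (intro ballI)
    fix X1 X2 assume "X1 \<in> {hom_test m S N (H N) | N S. S \<in> p}" "X2 \<in> {hom_test m S N (H N) | N S. S \<in> p}"
    then obtain N1 S1 N2 S2 where S: "S1 \<in> p" "S2 \<in> p"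
      and X: "X1 = hom_test m S1 N1 (H N1)" "X2 = hom_test m S2 N2 (H N2)" by blast
    have "hom_test m (S1 \<inter> S2) (max N1 N2) (H (max N1 N2)) \<subseteq> X1 \<inter> X2"
      unfolding X by (rule hom_test_refine) (auto intro: H_take)
    moreover have "S1 \<inter> S2 \<in> p" using ultrafilter_on_Int[OF p S] .
    ultimately show "\<exists>Z\<in>{hom_test m S N (H N) | N S. S \<in> p}. Z \<subseteq> X1 \<inter> X2" by blast
  qed
qed

lemma subflow_orbit_contains_phi_pre:
  assumes tp: "thick_ultrafilter_S m p"
  shows "subflow (orbit_contains m (phi_pre m ` p))"
proof -
  from SG_point_forcing_thick_ultrafilter[OF tp] obtain \<gamma> where \<gamma>: "\<gamma> \<in> SG"
    and forced: "\<forall>X\<in>{hom_test m S N (H N) | N S. S \<in> p}. forces \<gamma> X" ..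
  have "\<gamma> \<in> orbit_contains m (phi_pre m ` p)"
    using forced by (intro orbit_contains_phi_pre_if_forces[OF \<gamma>]) blast
  moreover have "phi_pre m ` p \<subseteq> Pow (H m)" using phi_pre_subset by blast
  ultimately show ?thesis
    using closed_orbit_contains invariant_orbit_contains by (auto simp: subflow_def)
qed

lemma thick_ultrafilter_eq_phi_filter_FY:
  assumes tp: "thick_ultrafilter_S m p"
  obtains M where "minimal_subflow M" "p = phi_filter m (FY M m)"
proof -
  have p: "is_ultrafilter_on (msets m) p" using tp by (simp add: thick_ultrafilter_S_def)
  obtain M where M: "minimal_subflow M" "M \<subseteq> orbit_contains m (phi_pre m ` p)"
    using minimal_subflow_exists[OF subflow_orbit_contains_phi_pre[OF tp]] by blast
  let ?q = "phi_filter m (FY M m)"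
  have q: "is_ultrafilter_on (msets m) ?q"
    using thick_ultrafilter_phi_filter_FY[OF M(1)] by (simp add: thick_ultrafilter_S_def)
  have "p \<subseteq> ?q"
  proof
    fix S assume S: "S \<in> p"
    have "phi_pre m S \<in> \<alpha> m" if "\<alpha> \<in> M" for \<alpha>
      using orbit_contains_subset that M(2) S by blast
    then have "phi_pre m S \<in> FY M m" using phi_pre_subset by (auto simp: FY_def)
    then show "S \<in> ?q" using ultrafilter_on_subset[OF p S] by (simp add: phi_filter_eq)
  qed
  then have "p = ?q" by (rule ultrafilter_on_subset_eq[OF p q])
  then show ?thesis using M(1) that by blast
qed

theorem mainTheorem9:
  fixes m :: nat
  shows "(\<forall>M. minimal_subflow M \<longrightarrow> thick_ultrafilter_S m (phi_filter m (FY M m)))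
       \<and> (\<forall>p. thick_ultrafilter_S m p \<longrightarrow>
             max_thick_filter_H m (filter_generated (H m) (phi_pre m ` p))
           \<and> (\<exists>M. minimal_subflow M \<and> p = phi_filter m (FY M m)))"
  using thick_ultrafilter_phi_filter_FY max_thick_filter_phi_pre thick_ultrafilter_eq_phi_filter_FY
  by metis

end
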